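(* Let $n\ge 7$ and let $CU_n$ be the set of chemical unicyclic graphs on $n$ vertices. Define the following subsets of $CU_n$ (in each, all $m_{i,j}$ not listed are $0$): $\alpha_1$: $n_2=n$ and $m_{2,2}=n$; $\alpha_2$: $n_4=0,n_3=1,n_2=n-2,n_1=1$, $m_{1,3}=1$, $m_{2,3}=2$, $m_{2,2}=n-3$; $\alpha_3$: $n_4=0,n_3=1,n_2=n-2,n_1=1$, $m_{1,2}=1$, $m_{2,3}=3$, $m_{2,2}=n-4$; $\alpha_9$: $n_4=0,n_3=2,n_2=n-4,n_1=2$, $m_{1,2}=2$, $m_{2,3}=4$, $m_{3,3}=1$, $m_{2,2}=n-7$. Let $G_1\in\alpha_1$, $G_2\in\alpha_3$, $G_3\in\alpha_2$, $G_4\in\alpha_9$, and let $G\in CU_n$ not belong to $\alpha_1\cup\alpha_2\cup\alpha_3\cup\alpha_9$. Then $SO_{red}(G_1)<SO_{red}(G_2)<SO_{red}(G_3)<SO_{red}(G_4)<SO_{red}(G)$.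
   Context: All graphs are simple and connected. A chemical graph is a graph with maximum degree at most $4$; a unicyclic graph is a connected graph with $n$ vertices and $n$ edges. $d_G(u)$ is the degree of $u$, $n_i$ the number of vertices of degree $i$, and $m_{i,j}$ the number of edges joining a vertex of degree $i$ to a vertex of degree $j$. The reduced Sombor index is $SO_{red}(G)=\sum_{uv\in E(G)}\sqrt{(d_G(u)-1)^2+(d_G(v)-1)^2}$. *)

theory Defs
  imports Complex_Main
begin

definition simple_graph :: "'a set \<Rightarrow> 'a set set \<Rightarrow> bool" where
  "simple_graph V E \<longleftrightarrow> finite V \<and> (\<forall>e\<in>E. \<exists>u v. e = {u, v} \<and> u \<noteq> v \<and> u \<in> V \<and> v \<in> V)"

definition adj :: "'a set set \<Rightarrow> 'a \<Rightarrow> 'a \<Rightarrow> bool" where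
  "adj E u v \<longleftrightarrow> {u, v} \<in> E \<and> u \<noteq> v"

definition connected_graph :: "'a set \<Rightarrow> 'a set set \<Rightarrow> bool" where
  "connected_graph V E \<longleftrightarrow> V \<noteq> {} \<and> (\<forall>u\<in>V. \<forall>v\<in>V. (adj E)\<^sup>*\<^sup>* u v)"

definition degree :: "'a set set \<Rightarrow> 'a \<Rightarrow> nat" where
  "degree E v = card {e\<in>E. v \<in> e}"

definition chemical_unicyclic :: "nat \<Rightarrow> 'a set \<Rightarrow> 'a set set \<Rightarrow> bool" where
  "chemical_unicyclic n V E \<longleftrightarrow> simple_graph V E \<and> connected_graph V E \<and>
     card V = n \<and> card E = n \<and> (\<forall>v\<in>V. degree E v \<le> 4)"

definition nv :: "'a set \<Rightarrow> 'a set set \<Rightarrow> nat \<Rightarrow> nat" where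
  "nv V E i = card {v\<in>V. degree E v = i}"

definition me :: "'a set set \<Rightarrow> nat \<Rightarrow> nat \<Rightarrow> nat" where
  "me E i j = card {e\<in>E. \<exists>u v. e = {u, v} \<and> degree E u = i \<and> degree E v = j}"

text \<open>Reduced Sombor index: for an edge e = {u,v}, the sum over x in e of
  (d(x)-1)^2 equals (d(u)-1)^2 + (d(v)-1)^2.\<close>
definition SO_red :: "'a set set \<Rightarrow> real" where
  "SO_red E = (\<Sum>e\<in>E. sqrt (\<Sum>x\<in>e. (real (degree E x) - 1)^2))"

definition edge_profile :: "'a set set \<Rightarrow> (nat \<Rightarrow> nat \<Rightarrow> nat) \<Rightarrow> bool" where
  "edge_profile E p \<longleftrightarrow> (\<forall>i j. 1 \<le> i \<longrightarrow> i \<le> j \<longrightarrow> j \<le> 4 \<longrightarrow> me E i j = p i j)"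

definition alpha1 :: "nat \<Rightarrow> 'a set \<Rightarrow> 'a set set \<Rightarrow> bool" where
  "alpha1 n V E \<longleftrightarrow> chemical_unicyclic n V E \<and> nv V E 2 = n \<and>
     edge_profile E (\<lambda>i j. if (i, j) = (2, 2) then n else 0)"

definition alpha2 :: "nat \<Rightarrow> 'a set \<Rightarrow> 'a set set \<Rightarrow> bool" where
  "alpha2 n V E \<longleftrightarrow> chemical_unicyclic n V E \<and>
     nv V E 4 = 0 \<and> nv V E 3 = 1 \<and> nv V E 2 = n - 2 \<and> nv V E 1 = 1 \<and>
     edge_profile E (\<lambda>i j. if (i, j) = (1, 3) then 1 else if (i, j) = (2, 3) then 2
                         else if (i, j) = (2, 2) then n - 3 else 0)"

definition alpha3 :: "nat \<Rightarrow> 'a set \<Rightarrow> 'a set set \<Rightarrow> bool" where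
  "alpha3 n V E \<longleftrightarrow> chemical_unicyclic n V E \<and>
     nv V E 4 = 0 \<and> nv V E 3 = 1 \<and> nv V E 2 = n - 2 \<and> nv V E 1 = 1 \<and>
     edge_profile E (\<lambda>i j. if (i, j) = (1, 2) then 1 else if (i, j) = (2, 3) then 3
                         else if (i, j) = (2, 2) then n - 4 else 0)"

definition alpha9 :: "nat \<Rightarrow> 'a set \<Rightarrow> 'a set set \<Rightarrow> bool" where
  "alpha9 n V E \<longleftrightarrow> chemical_unicyclic n V E \<and>
     nv V E 4 = 0 \<and> nv V E 3 = 2 \<and> nv V E 2 = n - 4 \<and> nv V E 1 = 2 \<and>
     edge_profile E (\<lambda>i j. if (i, j) = (1, 2) then 2 else if (i, j) = (2, 3) then 4
                         else if (i, j) = (3, 3) then 1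
                         else if (i, j) = (2, 2) then n - 7 else 0)"

end

theory Submission
  imports Defs
begin

(* SO_red is linear in the edge counts: it is the sum of m_ij * sqrt ((i-1)^2 + (j-1)^2) over
   1 <= i <= j <= 4. In a connected unicyclic graph |E| = |V| = n, so the handshake lemma gives
   n_1 = n_3 + 2 n_4, and for n >= 3 there are no isolated vertices and no edges joining two
   leaves. With n_4 = 0 and n_3 <= 2 the counting equations, together with m_33 <= (n_3 choose 2),
   leave only the classes alpha1, alpha2, alpha3, alpha9 and five more profiles, which are
   compared directly. Otherwise n_3 >= 3 or n_4 >= 1; with the vertex weights w(1) = -21/50,
   w(2) = 0, w(3) = 7/10, w(4) = 7/5 every edge type other than (1,1) has
   sqrt ((i-1)^2 + (j-1)^2) >= sqrt 2 + w(i) + w(j), and summing over the edges gives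
   SO_red >= n sqrt 2 + 42/25 n_3 + 119/25 n_4, which exceeds the alpha9 value
   2 + 4 sqrt 5 + (n - 5) sqrt 2. *)

lemma simple_graph_edgeE:
  assumes "simple_graph V E" "e \<in> E"
  obtains u v where "e = {u, v}" "u \<noteq> v" "u \<in> V" "v \<in> V"
  using assms unfolding simple_graph_def by blast

lemma simple_graph_edge_subset: "simple_graph V E \<Longrightarrow> e \<in> E \<Longrightarrow> e \<subseteq> V"
  by (auto elim: simple_graph_edgeE)

lemma simple_graph_finite_edges:
  assumes "simple_graph V E"
  shows "finite E"
proof -
  have "E \<subseteq> Pow V"
    using simple_graph_edge_subset[OF assms] by blast
  then show ?thesis
    using assms finite_subset by (auto simp: simple_graph_def)
qed

lemma degree_ge_1:
  assumes "simple_graph V E" "e \<in> E" "x \<in> e"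
  shows "1 \<le> degree E x"
proof -
  have "finite {e \<in> E. x \<in> e}" "e \<in> {e \<in> E. x \<in> e}"
    using simple_graph_finite_edges[OF assms(1)] assms(2,3) by auto
  then show ?thesis
    unfolding degree_def by (metis One_nat_def Suc_leI card_gt_0_iff empty_iff)
qed

lemma sum_edges_sum_endpoints:
  fixes f :: "'a \<Rightarrow> 'b::comm_semiring_1"
  assumes "simple_graph V E"
  shows "(\<Sum>e\<in>E. \<Sum>x\<in>e. f x) = (\<Sum>v\<in>V. of_nat (degree E v) * f v)"
proof -
  have fin: "finite V" "finite E"
    using assms simple_graph_finite_edges by (auto simp: simple_graph_def)
  have "(\<Sum>e\<in>E. \<Sum>x\<in>e. f x) = (\<Sum>e\<in>E. \<Sum>v\<in>{v \<in> V. v \<in> e}. f v)"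
  proof (rule sum.cong[OF refl])
    fix e assume "e \<in> E"
    then have "{v \<in> V. v \<in> e} = e"
      using simple_graph_edge_subset[OF assms] by blast
    then show "(\<Sum>x\<in>e. f x) = (\<Sum>v\<in>{v \<in> V. v \<in> e}. f v)"
      by simp
  qed
  also have "\<dots> = (\<Sum>v\<in>V. \<Sum>e\<in>{e \<in> E. v \<in> e}. f v)"
    using sum.swap_restrict[OF fin(2,1)] .
  also have "\<dots> = (\<Sum>v\<in>V. of_nat (degree E v) * f v)"
    by (simp add: degree_def)
  finally show ?thesis .
qed

section \<open>Counting edges by the degrees of their endpoints\<close>

definition chemical_graph :: "'a set \<Rightarrow> 'a set set \<Rightarrow> bool" where
  "chemical_graph V E \<longleftrightarrow> simple_graph V E \<and> (\<forall>v\<in>V. degree E v \<le> 4)"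

lemma chemical_unicyclic_imp_chemical_graph:
  "chemical_unicyclic n V E \<Longrightarrow> chemical_graph V E"
  by (simp add: chemical_unicyclic_def chemical_graph_def)

definition edge_type :: "'a set set \<Rightarrow> 'a set \<Rightarrow> nat \<times> nat" where
  "edge_type E e = (Min (degree E ` e), Max (degree E ` e))"

lemma edge_type_doubleton:
  "edge_type E {u, v} = (min (degree E u) (degree E v), max (degree E u) (degree E v))"
  by (simp add: edge_type_def)

definition chemical_edge_types :: "(nat \<times> nat) set" where
  "chemical_edge_types = {(i, j). 1 \<le> i \<and> i \<le> j \<and> j \<le> 4}"

lemma chemical_edge_types_eq:
  "chemical_edge_types = {(1,1), (1,2), (1,3), (1,4), (2,2), (2,3), (2,4), (3,3), (3,4), (4,4)}"
proof -
  have "(i, j) \<in> {(1,1), (1,2), (1,3), (1,4), (2,2), (2,3), (2,4), (3,3), (3,4), (4,4)}"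
    if "1 \<le> i" "i \<le> j" "j \<le> 4" for i j :: nat
  proof -
    have "i \<in> {1, 2, 3, 4}" "j \<in> {1, 2, 3, 4}"
      using that by auto
    then show ?thesis
      using \<open>i \<le> j\<close> by (elim insertE emptyE) simp_all
  qed
  then show ?thesis
    unfolding chemical_edge_types_def by (intro equalityI subsetI) (auto split: prod.splits)
qed

lemma sum_chemical_edge_types:
  "(\<Sum>(i, j)\<in>chemical_edge_types. f i j) = f 1 1 + f 1 2 + f 1 3 + f 1 4 + f 2 2 + f 2 3
     + f 2 4 + f 3 3 + f 3 4 + f 4 4"
  by (simp add: chemical_edge_types_eq add.assoc)

lemma edge_type_mem_chemical_edge_types:
  assumes "chemical_graph V E" "e \<in> E"
  shows "edge_type E e \<in> chemical_edge_types"
proof -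
  have sg: "simple_graph V E"
    using assms(1) by (simp add: chemical_graph_def)
  obtain u v where "e = {u, v}" "u \<in> V" "v \<in> V"
    using simple_graph_edgeE[OF sg assms(2)] by metis
  moreover have "1 \<le> degree E u" "1 \<le> degree E v"
    using degree_ge_1[OF sg assms(2)] \<open>e = {u, v}\<close> by auto
  ultimately show ?thesis
    using assms(1) by (auto simp: edge_type_doubleton chemical_edge_types_def chemical_graph_def)
qed

lemma me_eq_card_edge_type:
  assumes "simple_graph V E" "i \<le> j"
  shows "me E i j = card {e \<in> E. edge_type E e = (i, j)}"
proof -
  have "(\<exists>u v. e = {u, v} \<and> degree E u = i \<and> degree E v = j) \<longleftrightarrow> edge_type E e = (i, j)"
    if e: "e \<in> E" for e
  proof -
    obtain u v where uv: "e = {u, v}"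
      using simple_graph_edgeE[OF assms(1) e] by metis
    have "(\<exists>u' v'. e = {u', v'} \<and> degree E u' = i \<and> degree E v' = j) \<longleftrightarrow>
        (degree E u = i \<and> degree E v = j) \<or> (degree E v = i \<and> degree E u = j)"
      unfolding uv doubleton_eq_iff by blast
    also have "\<dots> \<longleftrightarrow> edge_type E e = (i, j)"
      unfolding uv edge_type_doubleton using assms(2) by (auto simp: min_def max_def)
    finally show ?thesis .
  qed
  then show ?thesis
    unfolding me_def by (metis (no_types, lifting) Collect_cong)
qed

lemma sum_edges_by_type:
  fixes H :: "nat \<times> nat \<Rightarrow> 'b::comm_semiring_1"
  assumes "chemical_graph V E"
  shows "(\<Sum>e\<in>E. H (edge_type E e)) = (\<Sum>(i, j)\<in>chemical_edge_types. of_nat (me E i j) * H (i, j))"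
proof -
  have sg: "simple_graph V E"
    using assms by (simp add: chemical_graph_def)
  have fin: "finite E" "finite chemical_edge_types"
    using simple_graph_finite_edges[OF sg] by (simp_all add: chemical_edge_types_eq)
  have "edge_type E ` E \<subseteq> chemical_edge_types"
    using edge_type_mem_chemical_edge_types[OF assms] by blast
  then have "(\<Sum>e\<in>E. H (edge_type E e))
      = (\<Sum>t\<in>chemical_edge_types. \<Sum>e\<in>{e \<in> E. edge_type E e = t}. H (edge_type E e))"
    by (rule sum.group[OF fin, symmetric])
  also have "\<dots> = (\<Sum>t\<in>chemical_edge_types. of_nat (card {e \<in> E. edge_type E e = t}) * H t)"
    by (intro sum.cong refl) simp
  also have "\<dots> = (\<Sum>(i, j)\<in>chemical_edge_types. of_nat (me E i j) * H (i, j))"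
    by (intro sum.cong refl) (auto simp: chemical_edge_types_def me_eq_card_edge_type[OF sg])
  finally show ?thesis .
qed

lemma card_edges_by_type:
  assumes "chemical_graph V E"
  shows "card E = me E 1 1 + me E 1 2 + me E 1 3 + me E 1 4 + me E 2 2 + me E 2 3 + me E 2 4
     + me E 3 3 + me E 3 4 + me E 4 4"
  using sum_edges_by_type[OF assms, of "\<lambda>_. 1::nat"] by (simp add: sum_chemical_edge_types)

lemma degree_class_by_type:
  assumes "chemical_graph V E"
  shows "k * nv V E k = (\<Sum>(i, j)\<in>chemical_edge_types. me E i j * (of_bool (i = k) + of_bool (j = k)))"
proof -
  have sg: "simple_graph V E"
    using assms by (simp add: chemical_graph_def)
  have "k * nv V E k = (\<Sum>v\<in>V. degree E v * of_bool (degree E v = k))"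
    using sg by (simp add: nv_def simple_graph_def sum.If_cases Collect_conj_eq)
  also have "\<dots> = (\<Sum>e\<in>E. \<Sum>x\<in>e. of_bool (degree E x = k))"
    using sum_edges_sum_endpoints[OF sg, of "\<lambda>x. of_bool (degree E x = k) :: nat"] by simp
  also have "\<dots> = (\<Sum>e\<in>E. (\<lambda>(i, j). of_bool (i = k) + of_bool (j = k)) (edge_type E e))"
  proof (rule sum.cong[OF refl])
    fix e assume "e \<in> E"
    then obtain u v where "e = {u, v}" "u \<noteq> v"
      using simple_graph_edgeE[OF sg] by metis
    then show "(\<Sum>x\<in>e. of_bool (degree E x = k)) = (\<lambda>(i, j). of_bool (i = k) + of_bool (j = k)) (edge_type E e)"
      by (auto simp: edge_type_doubleton min_def max_def)
  qed
  also have "\<dots> = (\<Sum>(i, j)\<in>chemical_edge_types. me E i j * (of_bool (i = k) + of_bool (j = k)))"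
    using sum_edges_by_type[OF assms, of "\<lambda>(i, j). of_bool (i = k) + of_bool (j = k) :: nat"]
    by simp
  finally show ?thesis .
qed

lemma SO_red_by_type:
  assumes "chemical_graph V E"
  shows "SO_red E = me E 1 2 + 2 * me E 1 3 + 3 * me E 1 4 + me E 2 2 * sqrt 2 + me E 2 3 * sqrt 5
     + me E 2 4 * sqrt 10 + 2 * me E 3 3 * sqrt 2 + me E 3 4 * sqrt 13 + 3 * me E 4 4 * sqrt 2"
proof -
  have sg: "simple_graph V E"
    using assms by (simp add: chemical_graph_def)
  define w :: "nat \<times> nat \<Rightarrow> real" where
    "w = (\<lambda>(i, j). sqrt ((real i - 1)\<^sup>2 + (real j - 1)\<^sup>2))"
  have "SO_red E = (\<Sum>e\<in>E. w (edge_type E e))"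
    unfolding SO_red_def
  proof (rule sum.cong[OF refl])
    fix e assume "e \<in> E"
    then obtain u v where "e = {u, v}" "u \<noteq> v"
      using simple_graph_edgeE[OF sg] by metis
    then show "sqrt (\<Sum>x\<in>e. (real (degree E x) - 1)\<^sup>2) = w (edge_type E e)"
      by (cases "degree E u \<le> degree E v") (auto simp: w_def edge_type_doubleton add.commute)
  qed
  also have "\<dots> = (\<Sum>(i, j)\<in>chemical_edge_types. me E i j * w (i, j))"
    by (rule sum_edges_by_type[OF assms])
  also have "\<dots> = me E 1 2 + 2 * me E 1 3 + 3 * me E 1 4 + me E 2 2 * sqrt 2 + me E 2 3 * sqrt 5
     + me E 2 4 * sqrt 10 + 2 * me E 3 3 * sqrt 2 + me E 3 4 * sqrt 13 + 3 * me E 4 4 * sqrt 2"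
  proof -
    have "sqrt 8 = 2 * sqrt 2" "sqrt 18 = 3 * sqrt 2"
      using real_sqrt_mult[of 4 2] real_sqrt_mult[of 9 2] by simp_all
    then show ?thesis
      by (simp add: sum_chemical_edge_types w_def power2_eq_square)
  qed
  finally show ?thesis .
qed

lemma card_vertices_by_degree:
  assumes "chemical_graph V E"
  shows "card V = nv V E 0 + nv V E 1 + nv V E 2 + nv V E 3 + nv V E 4"
proof -
  have "finite V" "degree E ` V \<subseteq> {0, 1, 2, 3, 4}"
    using assms by (auto simp: chemical_graph_def simple_graph_def)
  from sum.group[OF this(1) _ this(2), of "\<lambda>_. 1::nat"]
  show ?thesis
    by (simp add: nv_def)
qed

lemma me_diag_le_choose:
  assumes "simple_graph V E"
  shows "me E k k \<le> nv V E k choose 2"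
proof -
  let ?D = "{v \<in> V. degree E v = k}"
  have "finite ?D"
    using assms by (simp add: simple_graph_def)
  have "{e \<in> E. \<exists>u v. e = {u, v} \<and> degree E u = k \<and> degree E v = k} \<subseteq> {B. B \<subseteq> ?D \<and> card B = 2}"
  proof (rule subsetI, elim CollectE conjE exE)
    fix e u v assume e: "e \<in> E" "e = {u, v}" "degree E u = k" "degree E v = k"
    obtain a b where "e = {a, b}" "a \<noteq> b" "a \<in> V" "b \<in> V"
      using simple_graph_edgeE[OF assms e(1)] by metis
    with e show "e \<in> {B. B \<subseteq> ?D \<and> card B = 2}"
      by (auto simp: doubleton_eq_iff)
  qed
  then have "me E k k \<le> card {B. B \<subseteq> ?D \<and> card B = 2}"
    unfolding me_def using \<open>finite ?D\<close> by (intro card_mono) auto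
  then show ?thesis
    using n_subsets[OF \<open>finite ?D\<close>] by (simp add: nv_def)
qed

section \<open>Connected graphs without isolated vertices or edges\<close>

lemma connected_graph_edge_closed_eq:
  assumes "connected_graph V E" "x \<in> S" "S \<subseteq> V"
    and closed: "\<And>e. e \<in> E \<Longrightarrow> e \<inter> S \<noteq> {} \<Longrightarrow> e \<subseteq> S"
  shows "S = V"
proof -
  have "v \<in> S" if "v \<in> V" for v
  proof -
    have "(adj E)\<^sup>*\<^sup>* x v"
      using assms(1-3) that unfolding connected_graph_def by blast
    then show ?thesis
    proof (induction rule: rtranclp_induct)
      case base
      show ?case by (rule assms(2))
    next
      case (step w y)
      then show ?case
        using closed[of "{w, y}"] by (auto simp: adj_def)
    qed
  qed
  then show ?thesis
    using assms(3) by blast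
qed

lemma nv_0_eq_0:
  assumes "simple_graph V E" "connected_graph V E" "2 \<le> card V"
  shows "nv V E 0 = 0"
proof (rule ccontr)
  assume "nv V E 0 \<noteq> 0"
  then obtain v where v: "v \<in> V" "degree E v = 0"
    unfolding nv_def by (metis (mono_tags, lifting) card.empty empty_Collect_eq)
  have "e \<inter> {v} = {}" if "e \<in> E" for e
    using degree_ge_1[OF assms(1) that, of v] v(2) by auto
  then have "{v} = V"
    using connected_graph_edge_closed_eq[OF assms(2), of v "{v}"] v(1) by blast
  then show False
    using assms(3) by auto
qed

lemma me_1_1_eq_0:
  assumes "simple_graph V E" "connected_graph V E" "3 \<le> card V"
  shows "me E 1 1 = 0"
proof (rule ccontr)
  assume "me E 1 1 \<noteq> 0"
  then have "{e \<in> E. \<exists>u v. e = {u, v} \<and> degree E u = 1 \<and> degree E v = 1} \<noteq> {}"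
    unfolding me_def by (metis card.empty)
  then obtain u v where e: "{u, v} \<in> E" "degree E u = 1" "degree E v = 1"
    by blast
  have "e' = {u, v}" if "e' \<in> E" "x \<in> e'" "x \<in> {u, v}" for e' x
  proof -
    have "card {e \<in> E. x \<in> e} = 1"
      using e(2,3) that(3) by (auto simp: degree_def)
    then obtain e'' where single: "{e \<in> E. x \<in> e} = {e''}"
      by (rule card_1_singletonE)
    have "e' \<in> {e \<in> E. x \<in> e}" "{u, v} \<in> {e \<in> E. x \<in> e}"
      using e(1) that by auto
    then show ?thesis
      unfolding single by simp
  qed
  then have "{u, v} = V"
    by (intro connected_graph_edge_closed_eq[OF assms(2), of u]
        simple_graph_edge_subset[OF assms(1) e(1)]) auto
  moreover have "card {u, v} \<le> 2"
    by (simp add: card_insert_if)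
  ultimately show False
    using assms(3) by simp
qed

section \<open>Chemical unicyclic graphs\<close>

lemma chemical_unicyclic_count_equations:
  assumes "chemical_unicyclic n V E" "3 \<le> n"
  shows "me E 1 1 = 0"
    and "n = me E 1 2 + me E 1 3 + me E 1 4 + me E 2 2 + me E 2 3 + me E 2 4 + me E 3 3
           + me E 3 4 + me E 4 4"
    and "nv V E 1 = me E 1 2 + me E 1 3 + me E 1 4"
    and "2 * nv V E 2 = me E 1 2 + 2 * me E 2 2 + me E 2 3 + me E 2 4"
    and "3 * nv V E 3 = me E 1 3 + me E 2 3 + 2 * me E 3 3 + me E 3 4"
    and "4 * nv V E 4 = me E 1 4 + me E 2 4 + me E 3 4 + 2 * me E 4 4"
    and "n = nv V E 1 + nv V E 2 + nv V E 3 + nv V E 4"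
    and "nv V E 1 = nv V E 3 + 2 * nv V E 4"
proof -
  have chem: "chemical_graph V E"
    using assms(1) by (rule chemical_unicyclic_imp_chemical_graph)
  have sg: "simple_graph V E" and conn: "connected_graph V E" and card: "card V = n" "card E = n"
    using assms(1) by (simp_all add: chemical_unicyclic_def)
  show m11: "me E 1 1 = 0"
    using me_1_1_eq_0[OF sg conn] card assms(2) by simp
  have n0: "nv V E 0 = 0"
    using nv_0_eq_0[OF sg conn] card assms(2) by simp
  show edges: "n = me E 1 2 + me E 1 3 + me E 1 4 + me E 2 2 + me E 2 3 + me E 2 4 + me E 3 3
           + me E 3 4 + me E 4 4"
    using card_edges_by_type[OF chem] card m11 by simp
  show d1: "nv V E 1 = me E 1 2 + me E 1 3 + me E 1 4"
    using degree_class_by_type[OF chem, of 1] m11 by (simp add: sum_chemical_edge_types)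
  show d2: "2 * nv V E 2 = me E 1 2 + 2 * me E 2 2 + me E 2 3 + me E 2 4"
    using degree_class_by_type[OF chem, of 2] by (simp add: sum_chemical_edge_types)
  show d3: "3 * nv V E 3 = me E 1 3 + me E 2 3 + 2 * me E 3 3 + me E 3 4"
    using degree_class_by_type[OF chem, of 3] by (simp add: sum_chemical_edge_types)
  show d4: "4 * nv V E 4 = me E 1 4 + me E 2 4 + me E 3 4 + 2 * me E 4 4"
    using degree_class_by_type[OF chem, of 4] by (simp add: sum_chemical_edge_types)
  show vertices: "n = nv V E 1 + nv V E 2 + nv V E 3 + nv V E 4"
    using card_vertices_by_degree[OF chem] card n0 by simp
  show "nv V E 1 = nv V E 3 + 2 * nv V E 4"
    using edges d1 d2 d3 d4 vertices by linarith
qed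

lemma edge_profileI:
  assumes "me E 1 1 = p 1 1" "me E 1 2 = p 1 2" "me E 1 3 = p 1 3" "me E 1 4 = p 1 4"
    "me E 2 2 = p 2 2" "me E 2 3 = p 2 3" "me E 2 4 = p 2 4" "me E 3 3 = p 3 3"
    "me E 3 4 = p 3 4" "me E 4 4 = p 4 4"
  shows "edge_profile E p"
  unfolding edge_profile_def
proof (intro allI impI)
  fix i j :: nat
  assume "1 \<le> i" "i \<le> j" "j \<le> 4"
  then have "(i, j) \<in> chemical_edge_types"
    by (simp add: chemical_edge_types_def)
  then show "me E i j = p i j"
    using assms unfolding chemical_edge_types_eq by auto
qed

lemma edge_profileD:
  "edge_profile E p \<Longrightarrow> 1 \<le> i \<Longrightarrow> i \<le> j \<Longrightarrow> j \<le> 4 \<Longrightarrow> me E i j = p i j"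
  unfolding edge_profile_def by blast

lemma SO_red_edge_profile:
  assumes "chemical_unicyclic n V E" "edge_profile E p"
  shows "SO_red E = p 1 2 + 2 * p 1 3 + 3 * p 1 4 + p 2 2 * sqrt 2 + p 2 3 * sqrt 5
     + p 2 4 * sqrt 10 + 2 * p 3 3 * sqrt 2 + p 3 4 * sqrt 13 + 3 * p 4 4 * sqrt 2"
  using SO_red_by_type[OF chemical_unicyclic_imp_chemical_graph[OF assms(1)]]
  by (simp add: edge_profileD[OF assms(2)])

lemma SO_red_alpha1:
  assumes "alpha1 n V E"
  shows "SO_red E = n * sqrt 2"
  using assms unfolding alpha1_def by (auto dest: SO_red_edge_profile)

lemma SO_red_alpha2:
  assumes "alpha2 n V E" "3 \<le> n"
  shows "SO_red E = 2 + 2 * sqrt 5 + (real n - 3) * sqrt 2"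
  using assms unfolding alpha2_def by (auto dest: SO_red_edge_profile simp: of_nat_diff)

lemma SO_red_alpha3:
  assumes "alpha3 n V E" "4 \<le> n"
  shows "SO_red E = 1 + 3 * sqrt 5 + (real n - 4) * sqrt 2"
  using assms unfolding alpha3_def by (auto dest: SO_red_edge_profile simp: of_nat_diff)

lemma SO_red_alpha9:
  assumes "alpha9 n V E" "7 \<le> n"
  shows "SO_red E = 2 + 4 * sqrt 5 + (real n - 5) * sqrt 2"
  using assms unfolding alpha9_def by (auto dest: SO_red_edge_profile simp: of_nat_diff algebra_simps)

section \<open>Classification by the number of branching vertices\<close>

lemma sqrt_bounds:
  "1414 / 1000 < sqrt 2" "sqrt 2 < 1415 / 1000" "2236 / 1000 < sqrt 5" "sqrt 5 < 2237 / 1000"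
  "3 < sqrt 10" "36 / 10 < sqrt 13"
  by (rule real_less_rsqrt real_less_lsqrt; simp add: power2_eq_square)+

lemma alpha1_if_no_branching:
  assumes "chemical_unicyclic n V E" "3 \<le> n" "nv V E 3 = 0" "nv V E 4 = 0"
  shows "alpha1 n V E"
proof -
  note eq = chemical_unicyclic_count_equations[OF assms(1,2)]
  have "me E 1 2 = 0" "me E 1 3 = 0" "me E 1 4 = 0" "me E 2 3 = 0" "me E 2 4 = 0"
    "me E 3 3 = 0" "me E 3 4 = 0" "me E 4 4 = 0"
    using eq(3-8) assms(3,4) by simp_all
  moreover from this have "me E 2 2 = n" "nv V E 2 = n"
    using eq(2,7,8) assms(3,4) by simp_all
  ultimately show ?thesis
    unfolding alpha1_def using assms(1) eq(1) by (auto intro!: edge_profileI)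
qed

lemma alpha2_or_alpha3_if_one_branching:
  assumes "chemical_unicyclic n V E" "3 \<le> n" "nv V E 3 = 1" "nv V E 4 = 0"
  shows "alpha2 n V E \<or> alpha3 n V E"
proof -
  note eq = chemical_unicyclic_count_equations[OF assms(1,2)]
  have m33: "me E 3 3 = 0"
    using me_diag_le_choose[of V E 3] assms(1,3) by (simp add: chemical_unicyclic_def numeral_2_eq_2)
  have zero: "me E 1 4 = 0" "me E 2 4 = 0" "me E 3 4 = 0" "me E 4 4 = 0"
    using eq(6) assms(4) by simp_all
  have nv: "nv V E 1 = 1" "nv V E 2 = n - 2"
    using eq(7,8) assms(3,4) by simp_all
  have "me E 1 2 + me E 1 3 = 1" "me E 1 3 + me E 2 3 = 3"
    "n = me E 1 2 + me E 1 3 + me E 2 2 + me E 2 3"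
    using eq(2,3,5) m33 zero nv assms(3) by simp_all
  then consider
      "me E 1 3 = 1" "me E 1 2 = 0" "me E 2 3 = 2" "me E 2 2 = n - 3"
    | "me E 1 3 = 0" "me E 1 2 = 1" "me E 2 3 = 3" "me E 2 2 = n - 4"
    by linarith
  then show ?thesis
  proof cases
    case 1
    then have "alpha2 n V E"
      unfolding alpha2_def using assms eq(1) m33 zero nv by (simp add: edge_profileI)
    then show ?thesis ..
  next
    case 2
    then have "alpha3 n V E"
      unfolding alpha3_def using assms eq(1) m33 zero nv by (simp add: edge_profileI)
    then show ?thesis ..
  qed
qed

lemma alpha9_or_SO_red_gt_if_two_branchings:
  assumes "chemical_unicyclic n V E" "3 \<le> n" "nv V E 3 = 2" "nv V E 4 = 0"
  shows "alpha9 n V E \<or> 2 + 4 * sqrt 5 + (real n - 5) * sqrt 2 < SO_red E"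
proof -
  note eq = chemical_unicyclic_count_equations[OF assms(1,2)]
  have m33: "me E 3 3 \<le> 1"
    using me_diag_le_choose[of V E 3] assms(1,3) by (simp add: chemical_unicyclic_def numeral_2_eq_2)
  have zero: "me E 1 4 = 0" "me E 2 4 = 0" "me E 3 4 = 0" "me E 4 4 = 0"
    using eq(6) assms(4) by simp_all
  have nv: "nv V E 1 = 2" "nv V E 2 = n - 4"
    using eq(7,8) assms(3,4) by simp_all
  have count: "me E 1 2 + me E 1 3 = 2" "me E 1 3 + me E 2 3 + 2 * me E 3 3 = 6"
    "n = me E 1 2 + me E 1 3 + me E 2 2 + me E 2 3 + me E 3 3"
    using eq(2,3,5) zero nv assms(3) by simp_all
  show ?thesis
  proof (cases "me E 1 3 = 0 \<and> me E 3 3 = 1")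
    case True
    then have "me E 1 2 = 2" "me E 2 3 = 4" "me E 2 2 = n - 7"
      using count by linarith+
    then have "alpha9 n V E"
      unfolding alpha9_def using assms True eq(1) zero nv by (simp add: edge_profileI)
    then show ?thesis ..
  next
    case False
    then consider "me E 1 3 = 0" "me E 3 3 = 0" | "me E 1 3 = 1" "me E 3 3 = 0"
      | "me E 1 3 = 2" "me E 3 3 = 0" | "me E 1 3 = 1" "me E 3 3 = 1"
      | "me E 1 3 = 2" "me E 3 3 = 1"
      using count(1) m33 by linarith
    then have "2 + 4 * sqrt 5 + (real n - 5) * sqrt 2 < SO_red E"
      using SO_red_by_type[OF chemical_unicyclic_imp_chemical_graph[OF assms(1)]] count zero
        sqrt_bounds
      by cases (simp_all add: algebra_simps)
    then show ?thesis ..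
  qed
qed

lemma SO_red_gt_if_many_branchings:
  assumes "chemical_unicyclic n V E" "3 \<le> n" "3 \<le> nv V E 3 \<or> 1 \<le> nv V E 4"
  shows "2 + 4 * sqrt 5 + (real n - 5) * sqrt 2 < SO_red E"
proof -
  note eq = chemical_unicyclic_count_equations[OF assms(1,2)]
  note eq_real = eq(2,3,5,6,8)[THEN arg_cong[where f = real], unfolded of_nat_add of_nat_mult of_nat_numeral]
  have "real n * sqrt 2 = real (me E 1 2) * sqrt 2 + real (me E 1 3) * sqrt 2
      + real (me E 1 4) * sqrt 2 + real (me E 2 2) * sqrt 2 + real (me E 2 3) * sqrt 2
      + real (me E 2 4) * sqrt 2 + real (me E 3 3) * sqrt 2 + real (me E 3 4) * sqrt 2
      + real (me E 4 4) * sqrt 2"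
    by (subst eq_real(1)) (simp add: algebra_simps)
  moreover have "real (me E 1 2) * (sqrt 2 - 21/50) \<le> real (me E 1 2) * 1"
    "real (me E 1 3) * (sqrt 2 - 21/50 + 7/10) \<le> real (me E 1 3) * 2"
    "real (me E 1 4) * (sqrt 2 - 21/50 + 7/5) \<le> real (me E 1 4) * 3"
    "real (me E 2 3) * (sqrt 2 + 7/10) \<le> real (me E 2 3) * sqrt 5"
    "real (me E 2 4) * (sqrt 2 + 7/5) \<le> real (me E 2 4) * sqrt 10"
    "real (me E 3 3) * (sqrt 2 + 7/10 + 7/10) \<le> real (me E 3 3) * (2 * sqrt 2)"
    "real (me E 3 4) * (sqrt 2 + 7/10 + 7/5) \<le> real (me E 3 4) * sqrt 13"
    "real (me E 4 4) * (sqrt 2 + 7/5 + 7/5) \<le> real (me E 4 4) * (3 * sqrt 2)"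
    using sqrt_bounds by (intro mult_left_mono; simp)+
  ultimately have "real n * sqrt 2 - 21/50 * nv V E 1 + 21/10 * nv V E 3 + 28/5 * nv V E 4 \<le> SO_red E"
    using SO_red_by_type[OF chemical_unicyclic_imp_chemical_graph[OF assms(1)]] eq_real(2-4)
    by (simp only: distrib_left distrib_right diff_conv_add_uminus)
  moreover have "(real n - 5) * sqrt 2 = real n * sqrt 2 - 5 * sqrt 2"
    by (simp add: algebra_simps)
  moreover have "3 \<le> real (nv V E 3) \<or> 1 \<le> real (nv V E 4)"
    using assms(3) by auto
  moreover have "0 \<le> real (nv V E 3)" "0 \<le> real (nv V E 4)"
    by simp_all
  ultimately show ?thesis
    using eq_real(5) sqrt_bounds(1,4) by (elim disjE) linarith+
qed

lemma SO_red_gt_outside_alphas: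
  assumes "chemical_unicyclic n V E" "3 \<le> n"
    and "\<not> alpha1 n V E" "\<not> alpha2 n V E" "\<not> alpha3 n V E" "\<not> alpha9 n V E"
  shows "2 + 4 * sqrt 5 + (real n - 5) * sqrt 2 < SO_red E"
proof -
  consider "3 \<le> nv V E 3 \<or> 1 \<le> nv V E 4" | "nv V E 3 = 0" "nv V E 4 = 0"
    | "nv V E 3 = 1" "nv V E 4 = 0" | "nv V E 3 = 2" "nv V E 4 = 0"
    by linarith
  then show ?thesis
  proof cases
    case 1
    then show ?thesis
      using SO_red_gt_if_many_branchings assms(1,2) by blast
  next
    case 2
    then show ?thesis
      using alpha1_if_no_branching assms(1-3) by blast
  next
    case 3
    then show ?thesis
      using alpha2_or_alpha3_if_one_branching assms(1,2,4,5) by blast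
  next
    case 4
    then show ?thesis
      using alpha9_or_SO_red_gt_if_two_branchings assms(1,2,6) by blast
  qed
qed

theorem theorem3p7:
  fixes n :: nat
    and V1 :: "'a set" and E1 :: "'a set set"
    and V2 :: "'b set" and E2 :: "'b set set"
    and V3 :: "'c set" and E3 :: "'c set set"
    and V4 :: "'d set" and E4 :: "'d set set"
    and V :: "'e set" and E :: "'e set set"
  assumes "n \<ge> 7"
    and "alpha1 n V1 E1"
    and "alpha3 n V2 E2"
    and "alpha2 n V3 E3"
    and "alpha9 n V4 E4"
    and "chemical_unicyclic n V E"
    and "\<not> alpha1 n V E" and "\<not> alpha2 n V E" and "\<not> alpha3 n V E" and "\<not> alpha9 n V E"
  shows "SO_red E1 < SO_red E2 \<and> SO_red E2 < SO_red E3 \<and>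
         SO_red E3 < SO_red E4 \<and> SO_red E4 < SO_red E"
proof -
  have "SO_red E1 = n * sqrt 2"
    using SO_red_alpha1[OF assms(2)] .
  moreover have "SO_red E2 = 1 + 3 * sqrt 5 + (real n - 4) * sqrt 2"
    using SO_red_alpha3[OF assms(3)] assms(1) by simp
  moreover have "SO_red E3 = 2 + 2 * sqrt 5 + (real n - 3) * sqrt 2"
    using SO_red_alpha2[OF assms(4)] assms(1) by simp
  moreover have "SO_red E4 = 2 + 4 * sqrt 5 + (real n - 5) * sqrt 2"
    using SO_red_alpha9[OF assms(5)] assms(1) by simp
  moreover have "2 + 4 * sqrt 5 + (real n - 5) * sqrt 2 < SO_red E"
    using SO_red_gt_outside_alphas[OF assms(6) _ assms(7-10)] assms(1) by simp
  ultimately show ?thesis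
    using sqrt_bounds by (simp add: algebra_simps)
qed

end
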